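(* Let $V$ be a set of monomials of degree $d$ in $K[x_1,\dots,x_n]$ and let $u=\gcd(V)$. Then for every $i=1,2,\dots,n$: (1) $\overline{M_i}\,\mathrm{D}_i(V)\subset MV\setminus x_iV$; (2) $|MV|\geq |\mathrm{K}_i(V)|^{<n-1>}+|\mathrm{D}_i(V)|^{<n-2>}$. Moreover, equality holds in (2) if and only if $\mathrm{K}_i(V)$ is a Gotzmann set of $K[x_1,\dots,x_n]$, $\frac{1}{u}\mathrm{D}_i(V)$ is a Gotzmann set of $K[x_1,\dots,x_{i-1},x_{i+1},\dots,x_n]$, and $x_i\mathrm{D}_i(V)\subset \overline{M_i}\,\mathrm{K}_i(V)$.
   Context: $K$ is a field and $R=K[x_1,\dots,x_n]$ with all $\deg x_i=1$. $M=\{x_1,\dots,x_n\}$, $M^d$ is the set of monomials of degree $d$ ($M^0=\{1\}$), and $\overline{M_i}=M\setminus\{x_i\}$. For a monomial $w$ and a set $V$ of monomials of degree $d$, $wV=\{wv: v\in V\}$, $MV=\{x_jv: v\in V, 1\le j\le n\}$, $\overline{M_i}V=\{x_jv: v\in V, j\neq i\}$; $|V|$ is the cardinality and $\gcd(V)$ the greatest common divisor of the monomials in $V$; $\frac1u W=\{w/u: w\in W\}$. For positive integers $m,h$, the $m$th binomial representation is the unique expression $h=\sum_{j=i}^{m}{h(j)+j\choose j}$ with $h(m)\ge\dots\ge h(i)\ge0$, $i\ge1$, and $h^{<m>}=\sum_{j=i}^m{h(j)+j+1\choose j}$; conventions: $0^{<m>}=0$ for all $m$, and $1^{<0>}=1$.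 A set $W$ of monomials of the same degree in a polynomial ring $K[y_1,\dots,y_m]$ (with variable set $N=\{y_1,\dots,y_m\}$) is a Gotzmann set of that ring if $|NW|=|W|^{<m-1>}$. With $u=\gcd(V)$: if $|V|>1$, $\mathrm{K}_i(V)=\{v\in V: x_iu \text{ divides } v\}$ and $\mathrm{D}_i(V)=V\setminus \mathrm{K}_i(V)$; if $|V|=1$, $\mathrm{K}_i(V)=V$ and $\mathrm{D}_i(V)=\emptyset$. *)

theory Defs
  imports Main
begin

text \<open>Monomials in the variables x_1,...,x_n are represented by their exponent
  vectors, functions nat => nat; the coefficient field K plays no role.\<close>

type_synonym monomial = "nat \<Rightarrow> nat"

definition var :: "nat \<Rightarrow> monomial" where
  "var j = (\<lambda>k. if k = j then 1 else 0)"

definition mmul :: "monomial \<Rightarrow> monomial \<Rightarrow> monomial" where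
  "mmul a b = (\<lambda>k. a k + b k)"

definition mdvd :: "monomial \<Rightarrow> monomial \<Rightarrow> bool" where
  "mdvd a b \<longleftrightarrow> (\<forall>k. a k \<le> b k)"

definition monos_in :: "nat set \<Rightarrow> nat \<Rightarrow> monomial set" where
  "monos_in N d = {m. (\<forall>k. m k \<noteq> 0 \<longrightarrow> k \<in> N) \<and> (\<Sum>k\<in>N. m k) = d}"

definition mscale :: "monomial \<Rightarrow> monomial set \<Rightarrow> monomial set" where
  "mscale w V = {mmul w v | v. v \<in> V}"

text \<open>N V = {x_j v : v in V, j in N}; MV is mul_vars {1..n} V,
  and the bar-M_i V is mul_vars ({1..n} - {i}) V.\<close>
definition mul_vars :: "nat set \<Rightarrow> monomial set \<Rightarrow> monomial set" where
  "mul_vars N V = {mmul (var j) v | j v. j \<in> N \<and> v \<in> V}"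

definition mdiv :: "monomial \<Rightarrow> monomial set \<Rightarrow> monomial set" where
  "mdiv u W = {(\<lambda>k. w k - u k) | w. w \<in> W}"

definition mgcd :: "monomial set \<Rightarrow> monomial" where
  "mgcd V = (\<lambda>k. Min ((\<lambda>v. v k) ` V))"

definition Kset :: "nat \<Rightarrow> monomial set \<Rightarrow> monomial set" where
  "Kset i V = (if card V > 1 then {v \<in> V. mdvd (mmul (var i) (mgcd V)) v} else V)"

definition Dset :: "nat \<Rightarrow> monomial set \<Rightarrow> monomial set" where
  "Dset i V = (if card V > 1 then V - Kset i V else {})"

definition binom_rep :: "nat \<Rightarrow> nat \<Rightarrow> (nat \<Rightarrow> nat) \<Rightarrow> nat \<Rightarrow> bool" where
  "binom_rep m h a i \<longleftrightarrow> 1 \<le> i \<and> i \<le> m \<and>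
     (\<forall>j k. i \<le> j \<longrightarrow> j \<le> k \<longrightarrow> k \<le> m \<longrightarrow> a j \<le> a k) \<and>
     h = (\<Sum>j=i..m. (a j + j) choose j)"

text \<open>h^{<m>}; conventions 0^{<m>} = 0 and 1^{<0>} = 1 (for m = 0 we set h^{<0>} = h,
  only h \<le> 1 being relevant).\<close>
definition bin_up :: "nat \<Rightarrow> nat \<Rightarrow> nat" where
  "bin_up m h = (if h = 0 then 0 else if m = 0 then h else
     (THE s. \<exists>a i. binom_rep m h a i \<and> s = (\<Sum>j=i..m. (a j + j + 1) choose j)))"

definition gotzmann :: "nat set \<Rightarrow> monomial set \<Rightarrow> bool" where
  "gotzmann N W \<longleftrightarrow> (\<exists>d. W \<subseteq> monos_in N d) \<and>
     card (mul_vars N W) = bin_up (card N - 1) (card W)"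

end

theory Submission
  imports Defs
begin

text \<open>Write \<open>M' = M - {x\<^sub>i}\<close>, \<open>K = K\<^sub>i(V)\<close>, \<open>D = D\<^sub>i(V)\<close>. Then \<open>MV\<close> is the disjoint union of
  \<open>MK \<union> x\<^sub>i D\<close> and \<open>M'D\<close>: every monomial of \<open>M'D\<close> has the \<open>x\<^sub>i\<close>-exponent of \<open>u = gcd V\<close>, while
  those of \<open>MK\<close> and \<open>x\<^sub>i V\<close> have a larger one; this is (1). Division by \<open>u\<close> identifies \<open>M'D\<close>
  with the shadow of \<open>D/u\<close> in the \<open>n - 1\<close> variables other than \<open>x\<^sub>i\<close>, so Macaulay's theorem
  \<open>|NW| \<ge> |W|\<^bsup><m-1>\<^esup>\<close>, applied to \<open>K\<close> and to \<open>D/u\<close>, gives (2), with equality iff both bounds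
  are attained and \<open>x\<^sub>i D \<subseteq> MK\<close>; as \<open>K\<close> and \<open>D\<close> are disjoint, the latter means
  \<open>x\<^sub>i D \<subseteq> M'K\<close>.

  Compressions \<open>x\<^sub>t \<rightarrow> x\<^sub>j\<close> reduce to a \<open>t\<close>-stable set \<open>S\<close>; its shadow contains the disjoint union of
  the shadow of its \<open>x\<^sub>t\<close>-free part (in one variable less) and \<open>x\<^sub>t S\<close>, while stability puts the shadow
  of \<open>S / x\<^sub>t\<close> inside \<open>S\<close>. A numerical inequality for \<open>h\<^bsup><m>\<^esup>\<close> closes the induction; it needs the
  subadditivity of \<open>h\<^bsup><j>\<^esup>\<close> for smaller \<open>j\<close>, which in turn follows from Macaulay's theorem in
  fewer variables by placing two extremal sets far apart.\<close>

section \<open>The Macaulay function\<close>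

declare binomial_Suc_Suc [simp del]

definition macaulay_top :: "nat \<Rightarrow> nat \<Rightarrow> nat" where
  "macaulay_top m h = (LEAST k. h < Suc k choose m)"

text \<open>The greedy form of \<open>h\<^bsup><m>\<^esup>\<close>: peel off the largest binomial \<open>k choose m \<le> h\<close>
  and recurse on the remainder with \<open>m - 1\<close>.\<close>

fun mac_up :: "nat \<Rightarrow> nat \<Rightarrow> nat" where
  "mac_up 0 h = h"
| "mac_up (Suc m) h = (if h = 0 then 0 else
     (Suc (macaulay_top (Suc m) h) choose Suc m)
       + mac_up m (h - (macaulay_top (Suc m) h choose Suc m)))"

lemma mac_up_0 [simp]: "mac_up m 0 = 0"
  by (cases m) auto

declare mac_up.simps(2) [simp del]

lemma Suc_le_add_choose: "0 < m \<Longrightarrow> Suc s \<le> (s + m) choose m"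
proof (induction s)
  case (Suc s)
  obtain m' where m: "m = Suc m'" using Suc.prems by (cases m) auto
  have "(Suc s + m) choose m = ((s + m) choose m') + ((s + m) choose m)"
    using m by (simp add: binomial_Suc_Suc)
  moreover have "0 < (s + m) choose m'" using m by simp
  ultimately show ?case using Suc by linarith
qed simp

lemma macaulay_top:
  assumes "0 < m" "0 < h"
  shows "m \<le> macaulay_top m h" "macaulay_top m h choose m \<le> h"
    "h < Suc (macaulay_top m h) choose m"
proof -
  let ?P = "\<lambda>k. h < Suc k choose m"
  have "?P (h + m)" using Suc_le_add_choose[OF assms(1), of "Suc h"] by simp
  then show P: "?P (macaulay_top m h)" unfolding macaulay_top_def by (rule LeastI)
  have least: "?P k \<Longrightarrow> macaulay_top m h \<le> k" for k
    unfolding macaulay_top_def by (rule Least_le)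
  show ge: "m \<le> macaulay_top m h"
  proof (rule ccontr)
    assume "\<not> m \<le> macaulay_top m h"
    then have "Suc (macaulay_top m h) choose m \<le> 1"
      by (cases "Suc (macaulay_top m h) = m") (auto simp: binomial_eq_0)
    with P assms show False by simp
  qed
  show "macaulay_top m h choose m \<le> h"
  proof (rule ccontr)
    obtain k where k: "macaulay_top m h = Suc k" using ge assms(1) by (cases "macaulay_top m h") auto
    assume "\<not> macaulay_top m h choose m \<le> h"
    then have "?P k" using k by simp
    with least k show False by fastforce
  qed
qed

lemma macaulay_top_eqI:
  assumes "m \<le> k" "k choose m \<le> h" "h < Suc k choose m"
  shows "macaulay_top m h = k"
  unfolding macaulay_top_def
proof (rule Least_equality)
  fix y assume "h < Suc y choose m"
  then show "k \<le> y"
    using assms(2) binomial_right_mono[of "Suc y" k m] by (cases "k \<le> y") auto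
qed fact

lemma mac_up_binomial_add:
  assumes "0 < m" "m \<le> k" "x < k choose (m - 1)"
  shows "mac_up m ((k choose m) + x) = (Suc k choose m) + mac_up (m - 1) x"
proof -
  obtain m' where m: "m = Suc m'" using assms(1) by (cases m) auto
  have "macaulay_top m ((k choose m) + x) = k"
    using assms m by (intro macaulay_top_eqI) (auto simp: binomial_Suc_Suc)
  moreover have "0 < k choose m" using assms by simp
  ultimately show ?thesis using m by (simp add: mac_up.simps)
qed

lemma macaulay_decomposition:
  assumes "0 < m" "0 < h"
  obtains k x where "m \<le> k" "x < k choose (m - 1)" "h = (k choose m) + x"
proof -
  obtain m' where m: "m = Suc m'" using assms(1) by (cases m) auto
  let ?k = "macaulay_top m h"
  have "Suc ?k choose m = (?k choose (m - 1)) + (?k choose m)"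
    using m by (simp add: binomial_Suc_Suc)
  then have "h - (?k choose m) < ?k choose (m - 1)" using macaulay_top[OF assms] by linarith
  then show ?thesis using macaulay_top[OF assms] that by auto
qed

lemma mac_up_binomial: "m \<le> k \<Longrightarrow> mac_up m (k choose m) = Suc k choose m"
  using mac_up_binomial_add[of m k 0] by (cases m) auto

lemma mac_up_1: "0 < h \<Longrightarrow> mac_up 1 h = Suc h"
  using mac_up_binomial[of 1 h] by simp

lemma le_mac_up: "h \<le> mac_up m h"
proof (induction m arbitrary: h)
  case (Suc m)
  show ?case
  proof (cases "h = 0")
    case False
    then obtain k x where kx: "Suc m \<le> k" "x < k choose m" "h = (k choose Suc m) + x"
      using macaulay_decomposition[of "Suc m" h] by auto
    then have "mac_up (Suc m) h = (Suc k choose Suc m) + mac_up m x"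
      using mac_up_binomial_add[of "Suc m" k x] by simp
    moreover have "k choose Suc m \<le> Suc k choose Suc m" by (rule binomial_right_mono) simp
    ultimately show ?thesis using kx Suc.IH[of x] by simp
  qed simp
qed simp

lemma mono_mac_up: "mono (mac_up m)"
proof (induction m)
  case 0
  then show ?case by (simp add: mono_def)
next
  case (Suc m)
  have "mac_up (Suc m) h \<le> mac_up (Suc m) (Suc h)" for h
  proof (cases "h = 0")
    case False
    then obtain k x where kx: "Suc m \<le> k" "x < k choose m" "h = (k choose Suc m) + x"
      using macaulay_decomposition[of "Suc m" h] by auto
    have h: "mac_up (Suc m) h = (Suc k choose Suc m) + mac_up m x"
      using mac_up_binomial_add[of "Suc m" k x] kx by simp
    show ?thesis
    proof (cases "Suc x < k choose m")
      case True
      then have "mac_up (Suc m) (Suc h) = (Suc k choose Suc m) + mac_up m (Suc x)"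
        using mac_up_binomial_add[of "Suc m" k "Suc x"] kx by simp
      then show ?thesis using h Suc.IH by (simp add: mono_def)
    next
      case False
      then have x: "Suc x = k choose m" using kx by simp
      then have "Suc h = Suc k choose Suc m" using kx by (simp add: binomial_Suc_Suc)
      then have "mac_up (Suc m) (Suc h) = Suc (Suc k) choose Suc m"
        using mac_up_binomial[of "Suc m" "Suc k"] kx by simp
      also have "\<dots> = (Suc k choose m) + (Suc k choose Suc m)" by (rule binomial_Suc_Suc)
      moreover have "mac_up m x \<le> mac_up m (k choose m)" using Suc.IH x by (simp add: mono_def)
      moreover have "mac_up m (k choose m) = Suc k choose m" using kx by (intro mac_up_binomial) simp
      ultimately show ?thesis using h by simp
    qed
  qed simp
  then show ?case unfolding mono_iff_le_Suc by blast
qed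

lemma mac_up_mono: "h \<le> h' \<Longrightarrow> mac_up m h \<le> mac_up m h'"
  using mono_mac_up[of m] by (simp add: mono_def)

lemma sum_binomial_diagonal: "(\<Sum>j=1..n. (c + j) choose j) + 1 = Suc (c + n) choose n"
proof -
  have "{..n} = insert 0 {1..n}" by auto
  then show ?thesis using sum_choose_lower[of c n] by simp
qed

lemma binom_rep_mac_up:
  assumes "binom_rep m h a i"
  shows "(\<Sum>j=i..m. (a j + j + 1) choose j) = mac_up m h"
  using assms
proof (induction m arbitrary: h)
  case 0
  then show ?case by (simp add: binom_rep_def)
next
  case (Suc m)
  have R: "1 \<le> i" "i \<le> Suc m" "\<And>j k. i \<le> j \<Longrightarrow> j \<le> k \<Longrightarrow> k \<le> Suc m \<Longrightarrow> a j \<le> a k"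
     "h = (\<Sum>j=i..Suc m. (a j + j) choose j)"
    using Suc.prems unfolding binom_rep_def by auto
  define k where "k = a (Suc m) + Suc m"
  define r where "r = (\<Sum>j=i..m. (a j + j) choose j)"
  have h: "h = (k choose Suc m) + r" using R(2,4) unfolding r_def k_def by (simp add: sum.cl_ivl_Suc)
  have "r \<le> (\<Sum>j=i..m. (a (Suc m) + j) choose j)"
    unfolding r_def by (intro sum_mono binomial_right_mono) (use R(3) in auto)
  also have "\<dots> \<le> (\<Sum>j=1..m. (a (Suc m) + j) choose j)"
    using R(1) by (intro sum_mono2) auto
  also have "\<dots> < k choose m"
    using sum_binomial_diagonal[of "a (Suc m)" m] unfolding k_def by simp
  finally have "mac_up (Suc m) h = (Suc k choose Suc m) + mac_up m r"
    using mac_up_binomial_add[of "Suc m" k r] h unfolding k_def by simp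
  moreover have "(\<Sum>j=i..m. (a j + j + 1) choose j) = mac_up m r" if "i \<le> m"
    using Suc.IH[of r] R that unfolding binom_rep_def r_def by auto
  moreover have "r = 0" if "i = Suc m" using that unfolding r_def by simp
  ultimately show ?case using R(2) unfolding k_def by (cases "i = Suc m") (auto simp: sum.cl_ivl_Suc)
qed

lemma binom_rep_exists: "0 < m \<Longrightarrow> 0 < h \<Longrightarrow> \<exists>a i. binom_rep m h a i"
proof (induction m arbitrary: h)
  case (Suc m)
  obtain k x where kx: "Suc m \<le> k" "x < k choose m" "h = (k choose Suc m) + x"
    using macaulay_decomposition[of "Suc m" h] Suc.prems by auto
  show ?case
  proof (cases "x = 0")
    case True
    then have "binom_rep (Suc m) h (\<lambda>_. k - Suc m) (Suc m)" unfolding binom_rep_def using kx by simp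
    then show ?thesis by blast
  next
    case False
    then have "0 < m" using kx by (cases m) auto
    then obtain a i where r: "binom_rep m x a i" using Suc.IH[of x] False by blast
    then have "(a m + m) choose m \<le> x"
      unfolding binom_rep_def by (auto intro: member_le_sum)
    then have "a m + m < k"
      using kx(2) binomial_right_mono[of k "a m + m" m] by (cases "k \<le> a m + m") auto
    moreover have "a j \<le> a m" if "i \<le> j" "j \<le> m" for j
      using r that unfolding binom_rep_def by blast
    ultimately have "a j \<le> k - Suc m" if "i \<le> j" "j \<le> m" for j
      using that by fastforce
    then have "binom_rep (Suc m) h (a(Suc m := k - Suc m)) i"
      using r kx unfolding binom_rep_def by (auto simp: sum.cl_ivl_Suc le_Suc_eq intro!: sum.cong)
    then show ?thesis by blast
  qed
qed simp

lemma bin_up_eq_mac_up: "bin_up m h = mac_up m h"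
proof (cases "h = 0 \<or> m = 0")
  case False
  then obtain a i where "binom_rep m h a i" using binom_rep_exists by blast
  then have "(THE s. \<exists>a i. binom_rep m h a i \<and> s = (\<Sum>j=i..m. (a j + j + 1) choose j)) = mac_up m h"
    using binom_rep_mac_up by (intro the_equality) metis+
  then show ?thesis using False unfolding bin_up_def by simp
qed (auto simp: bin_up_def)

definition mac_subadditive :: "nat \<Rightarrow> bool" where
  "mac_subadditive m \<longleftrightarrow> (\<forall>x y. mac_up m (x + y) \<le> mac_up m x + mac_up m y)"

lemma mac_up_binomial_add_ge:
  assumes "0 < m" "mac_subadditive (m - 1)" "m \<le> k"
  shows "(Suc k choose m) + mac_up (m - 1) x \<le> mac_up m ((k choose m) + x)"
  using assms(3)
proof (induction x arbitrary: k rule: less_induct)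
  case (less x)
  obtain m' where m: "m = Suc m'" using assms(1) by (cases m) auto
  show ?case
  proof (cases "x < k choose m'")
    case True
    then show ?thesis using mac_up_binomial_add[of m k x] assms less.prems m by simp
  next
    case False
    text \<open>Move one binomial across: \<open>k choose m + x = Suc k choose m + x'\<close>.\<close>
    define x' where "x' = x - (k choose m')"
    have x: "x = (k choose m') + x'" using False x'_def by simp
    have "x' < x" using x less.prems m by simp
    then have "(Suc (Suc k) choose m) + mac_up m' x' \<le> mac_up m ((Suc k choose m) + x')"
      using less.IH[of x' "Suc k"] less.prems m by simp
    moreover have "mac_up m' x \<le> mac_up m' (k choose m') + mac_up m' x'"
      using assms(2) m unfolding x mac_subadditive_def by simp
    moreover have "mac_up m' (k choose m') = Suc k choose m'"
      using less.prems m by (intro mac_up_binomial) simp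
    moreover have "(k choose m) + x = (Suc k choose m) + x'"
      using x m by (simp add: binomial_Suc_Suc)
    moreover have "Suc (Suc k) choose m = (Suc k choose m') + (Suc k choose m)"
      using m by (simp add: binomial_Suc_Suc)
    ultimately show ?thesis using m by simp
  qed
qed

lemma exists_greatest_mac_up_le:
  assumes "mac_up m b \<le> h"
  obtains \<beta> where "b \<le> \<beta>" "mac_up m \<beta> \<le> h" "\<And>y. mac_up m y \<le> h \<Longrightarrow> y \<le> \<beta>"
proof -
  let ?P = "\<lambda>y. mac_up m y \<le> h"
  have bounded: "?P y \<Longrightarrow> y \<le> h" for y using le_mac_up[of y m] by linarith
  show ?thesis
    using that GreatestI_nat[of ?P b h] Greatest_le_nat[of ?P _ h] assms bounded by blast
qed

lemma mac_up_Suc_le_small: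
  assumes "0 < m" "mac_subadditive (m - 1)"
    and add_le: "\<And>a b. mac_up m b \<le> a + b \<Longrightarrow> mac_up m (a + b) \<le> mac_up (m - 1) a + a + b"
    and "h \<le> Suc m"
  shows "mac_up (Suc m) h \<le> mac_up m h + h"
proof (cases "h = 0")
  case False
  have "mac_up (Suc m) h = (Suc (Suc m) choose Suc m) + mac_up m (h - 1)"
    using mac_up_binomial_add[of "Suc m" "Suc m" "h - 1"] assms(4) False by simp
  moreover have "(Suc m choose m) + mac_up (m - 1) (h - 1) \<le> mac_up m ((m choose m) + (h - 1))"
    using mac_up_binomial_add_ge[of m m "h - 1"] assms(1,2) by simp
  moreover have "mac_up m (h - 1) \<le> mac_up (m - 1) (h - 1) + (h - 1)"
    using add_le[of 0 "h - 1"] by simp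
  ultimately show ?thesis using False by simp
qed simp

text \<open>Take \<open>\<beta>\<close> maximal with \<open>\<beta>\<^bsup><m+1>\<^esup> \<le> a + b\<close> and write \<open>\<beta> = (k choose m + 1) + r\<close>; maximality
  gives \<open>a + b = (k + 1 choose m + 1) + y\<close> with \<open>r \<le> y < (k + 1 choose m)\<close>, and the claim follows
  from the inequality one level down, applied to \<open>y = (y - r) + r\<close>.\<close>

lemma mac_up_add_le_step:
  assumes "0 < m" "mac_subadditive (m - 1)"
    and add_le: "\<And>a b. mac_up m b \<le> a + b \<Longrightarrow> mac_up m (a + b) \<le> mac_up (m - 1) a + a + b"
    and b: "mac_up (Suc m) b \<le> a + b"
  shows "mac_up (Suc m) (a + b) \<le> mac_up m a + a + b"
proof -
  define h where "h = a + b"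
  obtain \<beta> where \<beta>: "b \<le> \<beta>" "mac_up (Suc m) \<beta> \<le> h"
      and greatest: "\<And>y. mac_up (Suc m) y \<le> h \<Longrightarrow> y \<le> \<beta>"
    using exists_greatest_mac_up_le b unfolding h_def by metis
  show ?thesis
  proof (cases "\<beta> = 0")
    case True
    have "mac_up (Suc m) 1 = Suc (Suc m)" using mac_up_binomial[of "Suc m" "Suc m"] by simp
    then have "h \<le> Suc m" using greatest[of 1] True by fastforce
    then show ?thesis
      using mac_up_Suc_le_small[OF assms(1-3)] True \<beta>(1) unfolding h_def by simp
  next
    case False
    then obtain k r where kr: "Suc m \<le> k" "r < k choose m" "\<beta> = (k choose Suc m) + r"
      using macaulay_decomposition[of "Suc m" \<beta>] by auto
    define y where "y = h - (Suc k choose Suc m)"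
    have "mac_up (Suc m) \<beta> = (Suc k choose Suc m) + mac_up m r"
      using mac_up_binomial_add[of "Suc m" k r] kr by simp
    then have r: "mac_up m r \<le> y" "r \<le> y" and hy: "h = (Suc k choose Suc m) + y"
      using \<beta>(2) le_mac_up[of r m] unfolding y_def by auto
    have "y < Suc k choose m"
    proof (rule ccontr)
      assume "\<not> y < Suc k choose m"
      then have "mac_up (Suc m) (Suc k choose Suc m) \<le> h"
        using hy kr(1) mac_up_binomial[of "Suc m" "Suc k"] by (simp add: binomial_Suc_Suc)
      then show False using greatest kr by (fastforce simp: binomial_Suc_Suc)
    qed
    then have "mac_up (Suc m) h = (Suc k choose m) + (Suc k choose Suc m) + mac_up m y"
      using mac_up_binomial_add[of "Suc m" "Suc k" y] kr hy by (simp add: binomial_Suc_Suc)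
    also have "\<dots> \<le> (Suc k choose m) + mac_up (m - 1) (y - r) + h"
      using add_le[of r "y - r"] r hy by simp
    also have "\<dots> \<le> mac_up m ((k choose m) + (y - r)) + h"
      using mac_up_binomial_add_ge[of m k "y - r"] assms(1,2) kr(1) by simp
    also have "\<dots> \<le> mac_up m a + h"
      using mac_up_mono[of "(k choose m) + (y - r)" a m] \<beta>(1) hy kr r
      unfolding h_def by (simp add: binomial_Suc_Suc)
    finally show ?thesis unfolding h_def by simp
  qed
qed

lemma mac_up_add_le:
  assumes "0 < m" "\<And>j. j + 2 \<le> m \<Longrightarrow> mac_subadditive j" "mac_up m b \<le> a + b"
  shows "mac_up m (a + b) \<le> mac_up (m - 1) a + a + b"
  using assms
proof (induction m arbitrary: a b)
  case (Suc m)
  show ?case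
  proof (cases "m = 0")
    case True
    have "0 < a" if "0 < b" using that Suc.prems(3) True mac_up_1[of b] by simp
    then show ?thesis using True mac_up_1[of "a + b"] by (cases "a + b = 0") auto
  next
    case False
    have "mac_subadditive (m - 1)" using Suc.prems(2)[of "m - 1"] False by simp
    then show ?thesis using mac_up_add_le_step[of m] Suc False by simp
  qed
qed simp

section \<open>Monomials\<close>

definition inc_exp :: "nat \<Rightarrow> monomial \<Rightarrow> monomial" where
  "inc_exp j w = w(j := Suc (w j))"

definition dec_exp :: "nat \<Rightarrow> monomial \<Rightarrow> monomial" where
  "dec_exp j w = w(j := w j - 1)"

definition var_pow :: "nat \<Rightarrow> nat \<Rightarrow> monomial" where
  "var_pow s p = (\<lambda>k. if k = s then p else 0)"

lemma inc_exp_apply: "inc_exp j w k = (if k = j then Suc (w k) else w k)"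
  by (simp add: inc_exp_def)

lemma mmul_var: "mmul (var j) v = inc_exp j v"
  by (auto simp: mmul_def var_def inc_exp_def)

lemma inc_dec_exp: "0 < w t \<Longrightarrow> inc_exp t (dec_exp t w) = w"
  by (auto simp: inc_exp_def dec_exp_def)

lemma dec_inc_exp [simp]: "dec_exp t (inc_exp t w) = w"
  by (auto simp: inc_exp_def dec_exp_def)

lemma inc_exp_inject: "inc_exp j v = inc_exp j w \<longleftrightarrow> v = w"
  by (metis dec_inc_exp)

lemma inc_exp_mmul: "inc_exp j (mmul c a) = mmul c (inc_exp j a)"
  by (auto simp: inc_exp_def mmul_def)

lemma card_inc_exp_image: "card (inc_exp j ` A) = card A"
  by (simp add: card_image inj_on_def inc_exp_inject)

lemma mmul_inject: "mmul c a = mmul c b \<longleftrightarrow> a = b"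
  by (auto simp: mmul_def fun_eq_iff)

lemma card_mmul_image: "card (mmul c ` A) = card A"
  by (simp add: card_image inj_on_def mmul_inject)

lemma mscale_var: "mscale (var i) V = inc_exp i ` V"
  by (auto simp: mscale_def mmul_var)

lemma monos_in_zero: "w \<in> monos_in N d \<Longrightarrow> k \<notin> N \<Longrightarrow> w k = 0"
  by (auto simp: monos_in_def)

lemma monos_in_sum: "w \<in> monos_in N d \<Longrightarrow> (\<Sum>k\<in>N. w k) = d"
  by (simp add: monos_in_def)

lemma monos_in_le:
  assumes "finite N" "w \<in> monos_in N d"
  shows "w k \<le> d"
proof (cases "k \<in> N")
  case True
  then show ?thesis using assms member_le_sum[of k N w] by (simp add: monos_in_def)
next
  case False
  then show ?thesis using monos_in_zero[OF assms(2) False] by simp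
qed

lemma sum_inc_exp: "finite N \<Longrightarrow> j \<in> N \<Longrightarrow> (\<Sum>k\<in>N. inc_exp j w k) = Suc (\<Sum>k\<in>N. w k)"
  by (simp add: inc_exp_def sum.remove)

lemma inc_exp_monos_in:
  "finite N \<Longrightarrow> j \<in> N \<Longrightarrow> w \<in> monos_in N d \<Longrightarrow> inc_exp j w \<in> monos_in N (Suc d)"
  using sum_inc_exp[of N j w] by (auto simp: monos_in_def inc_exp_def)

lemma dec_exp_monos_in:
  assumes "finite N" "0 < w t" "w \<in> monos_in N d"
  shows "dec_exp t w \<in> monos_in N (d - 1)" "0 < d"
proof -
  have "t \<in> N" using assms(2,3) by (auto simp: monos_in_def)
  then have "Suc (\<Sum>k\<in>N. dec_exp t w k) = d"
    using sum_inc_exp[OF assms(1), of t "dec_exp t w"] inc_dec_exp[of w t, OF assms(2)] assms(3)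
    by (simp add: monos_in_def)
  then show "dec_exp t w \<in> monos_in N (d - 1)" "0 < d"
    using assms(3) by (auto simp: monos_in_def dec_exp_def)
qed

lemma finite_monos_in: "finite N \<Longrightarrow> finite (monos_in N d)"
  by (rule finite_subset[OF _ finite_set_of_finite_funs[of N "{0..d}" 0]])
    (auto simp: monos_in_le monos_in_zero)

lemma monos_in_subset: "finite N \<Longrightarrow> N' \<subseteq> N \<Longrightarrow> monos_in N' d \<subseteq> monos_in N d"
  unfolding monos_in_def by (auto intro: sum.mono_neutral_right)

lemma monos_in_0: "finite N \<Longrightarrow> monos_in N 0 = {\<lambda>_. 0}"
  by (auto simp: monos_in_def)

lemma monos_in_singleton: "monos_in {t} d = {var_pow t d}"
  by (auto simp: monos_in_def var_pow_def fun_eq_iff split: if_splits)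

lemma var_pow_monos_in: "finite N \<Longrightarrow> s \<in> N \<Longrightarrow> var_pow s p \<in> monos_in N p"
  by (auto simp: monos_in_def var_pow_def)

lemma mmul_image_monos_in:
  "c \<in> monos_in N p \<Longrightarrow> A \<subseteq> monos_in N q \<Longrightarrow> mmul c ` A \<subseteq> monos_in N (p + q)"
  by (auto simp: monos_in_def mmul_def sum.distrib)

lemma monos_in_exp_zero:
  assumes "finite N" "t \<in> N"
  shows "{w \<in> monos_in N d. w t = 0} = monos_in (N - {t}) d"
  using assms by (auto simp: monos_in_def sum.remove)

lemma monos_in_exp_pos:
  assumes "finite N" "t \<in> N"
  shows "{w \<in> monos_in N (Suc d). 0 < w t} = inc_exp t ` monos_in N d"
proof
  show "{w \<in> monos_in N (Suc d). 0 < w t} \<subseteq> inc_exp t ` monos_in N d"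
  proof
    fix w assume w: "w \<in> {w \<in> monos_in N (Suc d). 0 < w t}"
    then have "dec_exp t w \<in> monos_in N d" using dec_exp_monos_in(1)[OF assms(1), of w t "Suc d"] by simp
    then show "w \<in> inc_exp t ` monos_in N d" using inc_dec_exp[of w t] w by force
  qed
  show "inc_exp t ` monos_in N d \<subseteq> {w \<in> monos_in N (Suc d). 0 < w t}"
    using inc_exp_monos_in[OF assms] by (auto simp: inc_exp_def)
qed

lemma card_monos_in_Suc:
  assumes "finite N" "t \<in> N"
  shows "card (monos_in N (Suc d)) = card (monos_in (N - {t}) (Suc d)) + card (monos_in N d)"
proof -
  have "monos_in N (Suc d) = {w \<in> monos_in N (Suc d). w t = 0} \<union> {w \<in> monos_in N (Suc d). 0 < w t}"
    by auto
  then have "monos_in N (Suc d) = monos_in (N - {t}) (Suc d) \<union> inc_exp t ` monos_in N d"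
    unfolding monos_in_exp_zero[OF assms] monos_in_exp_pos[OF assms] .
  moreover have "monos_in (N - {t}) (Suc d) \<inter> inc_exp t ` monos_in N d = {}"
    using monos_in_zero[of _ "N - {t}" "Suc d" t] by (fastforce simp: inc_exp_def)
  ultimately show ?thesis
    using finite_monos_in[of N] finite_monos_in[of "N - {t}"] assms(1)
    by (simp add: card_Un_disjoint card_inc_exp_image)
qed

lemma card_monos_in:
  assumes "finite N" "card N = Suc m"
  shows "card (monos_in N d) = (d + m) choose m"
  using assms
proof (induction m arbitrary: N d)
  case 0
  then obtain t where "N = {t}" using card_1_singletonE by auto
  then show ?case by (simp add: monos_in_singleton)
next
  case (Suc m N d)
  obtain t where t: "t \<in> N" using Suc.prems by fastforce
  have "card (monos_in (N - {t}) e) = (e + m) choose m" for e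
    using Suc.IH[of "N - {t}"] Suc.prems t by simp
  then show ?case
    by (induction d) (simp_all add: monos_in_0 Suc.prems(1) card_monos_in_Suc[OF Suc.prems(1) t]
        binomial_Suc_Suc)
qed

lemma mem_mul_vars: "y \<in> mul_vars N V \<longleftrightarrow> (\<exists>j\<in>N. \<exists>v\<in>V. y = inc_exp j v)"
  by (auto simp: mul_vars_def mmul_var)

lemma mul_vars_eq_image: "mul_vars N V = (\<lambda>(j, v). inc_exp j v) ` (N \<times> V)"
  unfolding set_eq_iff mem_mul_vars by force

lemma finite_mul_vars: "finite N \<Longrightarrow> finite V \<Longrightarrow> finite (mul_vars N V)"
  by (simp add: mul_vars_eq_image)

lemma mul_vars_monos_in:
  "finite N \<Longrightarrow> V \<subseteq> monos_in N d \<Longrightarrow> mul_vars N V \<subseteq> monos_in N (Suc d)"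
  by (auto simp: mem_mul_vars intro!: inc_exp_monos_in)

lemma mul_vars_Un: "mul_vars N (A \<union> B) = mul_vars N A \<union> mul_vars N B"
  unfolding set_eq_iff Un_iff mem_mul_vars by blast

lemma mul_vars_mono: "V \<subseteq> V' \<Longrightarrow> N \<subseteq> N' \<Longrightarrow> mul_vars N V \<subseteq> mul_vars N' V'"
  unfolding subset_iff mem_mul_vars by blast

lemma mul_vars_empty [simp]: "mul_vars N {} = {}" "mul_vars {} V = {}"
  by (auto simp: mul_vars_def)

lemma mul_vars_insert: "mul_vars (insert s N) V = inc_exp s ` V \<union> mul_vars N V"
  unfolding set_eq_iff Un_iff image_iff mem_mul_vars by blast

lemma mul_vars_mmul_image: "mul_vars N (mmul c ` A) = mmul c ` mul_vars N A"
  unfolding mul_vars_eq_image by (force simp: inc_exp_mmul)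

lemma mul_vars_monos_in_eq:
  assumes "finite N" "N \<noteq> {}"
  shows "mul_vars N (monos_in N d) = monos_in N (Suc d)"
proof
  show "mul_vars N (monos_in N d) \<subseteq> monos_in N (Suc d)"
    using assms by (intro mul_vars_monos_in) auto
  show "monos_in N (Suc d) \<subseteq> mul_vars N (monos_in N d)"
  proof
    fix y assume y: "y \<in> monos_in N (Suc d)"
    have "\<exists>k\<in>N. 0 < y k"
    proof (rule ccontr)
      assume "\<not> (\<exists>k\<in>N. 0 < y k)"
      then have "(\<Sum>k\<in>N. y k) = 0" by simp
      then show False using monos_in_sum[OF y] by simp
    qed
    then obtain k where k: "k \<in> N" "0 < y k" by blast
    moreover have "dec_exp k y \<in> monos_in N d" using dec_exp_monos_in(1)[OF assms(1) k(2) y] by simp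
    ultimately show "y \<in> mul_vars N (monos_in N d)"
      unfolding mem_mul_vars by (auto intro!: bexI[of _ k] bexI[of _ "dec_exp k y"] simp: inc_dec_exp)
  qed
qed

section \<open>Compression\<close>

lemma sum_initial_segment_le:
  fixes S :: "nat set"
  assumes "finite S"
  shows "\<Sum>{0..<card S} \<le> \<Sum>S \<and> (\<Sum>{0..<card S} = \<Sum>S \<longrightarrow> S = {0..<card S})"
  using assms
proof (induction "card S" arbitrary: S)
  case (Suc n S)
  define \<mu> where "\<mu> = Max S"
  have "S \<noteq> {}" using Suc.hyps(2) by auto
  then have \<mu>: "\<mu> \<in> S" "\<And>s. s \<in> S \<Longrightarrow> s \<le> \<mu>"
    using Suc.prems unfolding \<mu>_def by auto
  have S': "card (S - {\<mu>}) = n" "finite (S - {\<mu>})" using Suc \<mu> by auto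
  note IH = Suc.hyps(1)[OF S'(1)[symmetric] S'(2), unfolded S'(1)]
  have "card S \<le> card {0..\<mu>}" using \<mu> Suc.prems by (intro card_mono) auto
  then have "n \<le> \<mu>" using Suc.hyps(2) by simp
  have sums: "\<Sum>S = \<Sum>(S - {\<mu>}) + \<mu>" "\<Sum>{0..<card S} = \<Sum>{0..<n} + n"
    using Suc.prems \<mu> by (simp_all add: sum.remove flip: Suc.hyps(2))
  show ?case
  proof (intro conjI impI)
    show "\<Sum>{0..<card S} \<le> \<Sum>S" using IH sums \<open>n \<le> \<mu>\<close> by linarith
    assume "\<Sum>{0..<card S} = \<Sum>S"
    then have "S - {\<mu>} = {0..<n}" "\<mu> = n" using IH sums \<open>n \<le> \<mu>\<close> by linarith+
    then show "S = {0..<card S}"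
      unfolding Suc.hyps(2)[symmetric] using \<mu>(1) by (metis atLeast0_lessThan_Suc insert_Diff)
  qed
qed simp

text \<open>Compression in the direction \<open>x\<^sub>t \<rightarrow> x\<^sub>j\<close>: monomials agreeing outside \<open>x\<^sub>j, x\<^sub>t\<close> form a
  fibre on which the degree determines everything but the \<open>x\<^sub>t\<close>-exponent; compressing replaces the
  \<open>x\<^sub>t\<close>-exponents occurring in each fibre by an initial segment of the same size.\<close>

locale compression =
  fixes N :: "nat set" and t j :: nat
  assumes finite_N: "finite N" and t_in_N: "t \<in> N" and j_in_N: "j \<in> N" and j_neq_t: "j \<noteq> t"
begin

definition base :: "monomial \<Rightarrow> monomial" where
  "base x = x(j := 0, t := 0)"

definition t_exps :: "monomial set \<Rightarrow> monomial \<Rightarrow> nat set" where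
  "t_exps X B = (\<lambda>x. x t) ` {x \<in> X. base x = B}"

definition compress :: "nat \<Rightarrow> monomial set \<Rightarrow> monomial set" where
  "compress d X = {w \<in> monos_in N d. w t < card (t_exps X (base w))}"

lemma sum_split_jt: "(\<Sum>k\<in>N. f k) = f j + f t + (\<Sum>k\<in>N - {j, t}. f k)"
proof -
  have "(\<Sum>k\<in>N. f k) = f j + (\<Sum>k\<in>N - {j}. f k)" using finite_N j_in_N by (simp add: sum.remove)
  also have "(\<Sum>k\<in>N - {j}. f k) = f t + (\<Sum>k\<in>N - {j} - {t}. f k)"
    using finite_N t_in_N j_neq_t by (intro sum.remove) auto
  also have "N - {j} - {t} = N - {j, t}" by auto
  finally show ?thesis by (simp add: add.assoc)
qed

lemma base_eqD: "base x = base y \<Longrightarrow> k \<noteq> j \<Longrightarrow> k \<noteq> t \<Longrightarrow> x k = y k"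
  unfolding base_def by (metis fun_upd_other)

lemma fibre_exp_sum:
  assumes "x \<in> monos_in N D" "y \<in> monos_in N D" "base x = base y"
  shows "x j + x t = y j + y t"
proof -
  have "(\<Sum>k\<in>N - {j, t}. x k) = (\<Sum>k\<in>N - {j, t}. y k)"
    using base_eqD[OF assms(3)] by (intro sum.cong) auto
  then show ?thesis using assms(1,2) sum_split_jt[of x] sum_split_jt[of y] by (simp add: monos_in_def)
qed

lemma fibre_inj:
  assumes "x \<in> monos_in N D" "y \<in> monos_in N D" "base x = base y" "x t = y t"
  shows "x = y"
proof
  fix k
  show "x k = y k"
    using fibre_exp_sum[OF assms(1-3)] assms(4) base_eqD[OF assms(3), of k] by (cases "k = j \<or> k = t") auto
qed

lemma finite_t_exps: "X \<subseteq> monos_in N D \<Longrightarrow> finite (t_exps X B)"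
  unfolding t_exps_def using finite_monos_in[OF finite_N] by (auto intro: finite_subset)

lemma sum_by_fibres:
  assumes "X \<subseteq> monos_in N D" "finite Bs" "base ` X \<subseteq> Bs"
  shows "(\<Sum>x\<in>X. g (x t)) = (\<Sum>B\<in>Bs. \<Sum>\<tau>\<in>t_exps X B. g \<tau>)"
proof -
  have "finite X" using assms(1) finite_monos_in[OF finite_N] finite_subset by blast
  then have "(\<Sum>x\<in>X. g (x t)) = (\<Sum>B\<in>Bs. \<Sum>x\<in>{x \<in> X. base x = B}. g (x t))"
    using sum.group[OF _ assms(2,3), of "\<lambda>x. g (x t)"] by simp
  also have "\<dots> = (\<Sum>B\<in>Bs. \<Sum>\<tau>\<in>t_exps X B. g \<tau>)"
  proof (intro sum.cong refl)
    fix B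
    have "inj_on (\<lambda>x. x t) {x \<in> X. base x = B}"
      using fibre_inj assms(1) by (intro inj_onI) (metis (mono_tags, lifting) mem_Collect_eq subsetD)
    then show "(\<Sum>x\<in>{x \<in> X. base x = B}. g (x t)) = (\<Sum>\<tau>\<in>t_exps X B. g \<tau>)"
      unfolding t_exps_def by (simp add: sum.reindex)
  qed
  finally show ?thesis .
qed

lemma card_by_fibres:
  "X \<subseteq> monos_in N D \<Longrightarrow> card X = (\<Sum>B\<in>base ` monos_in N D. card (t_exps X B))"
  using sum_by_fibres[of X D "base ` monos_in N D" "\<lambda>_. 1::nat"] finite_monos_in[OF finite_N] by auto

lemma t_weight_by_fibres:
  "X \<subseteq> monos_in N D \<Longrightarrow> (\<Sum>x\<in>X. x t) = (\<Sum>B\<in>base ` monos_in N D. \<Sum>(t_exps X B))"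
  using sum_by_fibres[of X D "base ` monos_in N D" id] finite_monos_in[OF finite_N] by auto

lemma compress_subset: "compress d X \<subseteq> monos_in N d"
  unfolding compress_def by auto

lemma t_exps_compress:
  assumes X: "X \<subseteq> monos_in N d"
  shows "t_exps (compress d X) B = {0..<card (t_exps X B)}"
proof
  show "t_exps (compress d X) B \<subseteq> {0..<card (t_exps X B)}"
    unfolding t_exps_def compress_def by auto
  show "{0..<card (t_exps X B)} \<subseteq> t_exps (compress d X) B"
  proof
    fix \<tau> assume \<tau>: "\<tau> \<in> {0..<card (t_exps X B)}"
    then have "t_exps X B \<noteq> {}" by auto
    then obtain x where x: "x \<in> X" "base x = B" unfolding t_exps_def by auto
    define s where "s = x j + x t"
    have "t_exps X B \<subseteq> {0..s}"
      using fibre_exp_sum[of _ d x] X x unfolding t_exps_def s_def by fastforce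
    then have "\<tau> \<le> s" using \<tau> card_mono[of "{0..s}" "t_exps X B"] by simp
    define w where "w = x(j := s - \<tau>, t := \<tau>)"
    have "base w = B" using x(2) unfolding w_def base_def by (simp add: fun_eq_iff)
    moreover have "w \<in> monos_in N d"
    proof -
      have xm: "x \<in> monos_in N d" using x X by auto
      have "(\<Sum>k\<in>N - {j, t}. w k) = (\<Sum>k\<in>N - {j, t}. x k)"
        unfolding w_def by (intro sum.cong) auto
      then have "(\<Sum>k\<in>N. w k) = (\<Sum>k\<in>N. x k)"
        using sum_split_jt[of w] sum_split_jt[of x] \<open>\<tau> \<le> s\<close> j_neq_t unfolding w_def s_def by simp
      then show ?thesis
        using xm j_in_N t_in_N unfolding w_def monos_in_def by auto
    qed
    ultimately show "\<tau> \<in> t_exps (compress d X) B"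
      using \<tau> unfolding t_exps_def compress_def by (intro image_eqI[of _ _ w]) (auto simp: w_def)
  qed
qed

lemma card_compress: "X \<subseteq> monos_in N d \<Longrightarrow> card (compress d X) = card X"
  using card_by_fibres[OF compress_subset] card_by_fibres t_exps_compress by simp

lemma base_inc_exp: "base (inc_exp k x) = (if k = j \<or> k = t then base x else inc_exp k (base x))"
  unfolding base_def inc_exp_def by (auto simp: fun_eq_iff)

lemma t_exps_subset_mul_vars:
  assumes "k \<in> N" "k \<noteq> t" "x \<in> X"
  shows "t_exps X (base x) \<subseteq> t_exps (mul_vars N X) (base (inc_exp k x))"
proof
  fix \<tau> assume "\<tau> \<in> t_exps X (base x)"
  then obtain x' where x': "x' \<in> X" "base x' = base x" "\<tau> = x' t" unfolding t_exps_def by auto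
  then have "base (inc_exp k x') = base (inc_exp k x)" "inc_exp k x' t = \<tau>"
    using assms(2) by (auto simp: base_inc_exp inc_exp_apply)
  moreover have "inc_exp k x' \<in> mul_vars N X" using x' assms(1) unfolding mem_mul_vars by blast
  ultimately show "\<tau> \<in> t_exps (mul_vars N X) (base (inc_exp k x))"
    unfolding t_exps_def by (intro image_eqI[of _ _ "inc_exp k x'"]) auto
qed

text \<open>Multiplying by \<open>x\<^sub>j\<close> and \<open>x\<^sub>t\<close> keeps the fibre, and the \<open>x\<^sub>t\<close>-exponent one above the maximum is new.\<close>

lemma card_t_exps_less_mul_vars:
  assumes X: "X \<subseteq> monos_in N d" and ne: "t_exps X B \<noteq> {}"
  shows "card (t_exps X B) < card (t_exps (mul_vars N X) B)"
proof -
  obtain x0 where x0: "x0 \<in> X" "base x0 = B" using ne unfolding t_exps_def by auto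
  have below: "t_exps X B \<subseteq> t_exps (mul_vars N X) B"
    using t_exps_subset_mul_vars[OF j_in_N j_neq_t x0(1)] x0(2) by (simp add: base_inc_exp)
  have shifted: "Suc ` t_exps X B \<subseteq> t_exps (mul_vars N X) B"
  proof
    fix \<sigma> assume "\<sigma> \<in> Suc ` t_exps X B"
    then obtain x where x: "x \<in> X" "base x = B" "\<sigma> = Suc (x t)" unfolding t_exps_def by auto
    then have "inc_exp t x \<in> mul_vars N X" "base (inc_exp t x) = B" "inc_exp t x t = \<sigma>"
      using t_in_N by (auto simp: mem_mul_vars base_inc_exp inc_exp_apply)
    then show "\<sigma> \<in> t_exps (mul_vars N X) B" unfolding t_exps_def by force
  qed
  have fin: "finite (t_exps X B)" "finite (t_exps (mul_vars N X) B)"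
    using finite_t_exps X mul_vars_monos_in[OF finite_N X] by auto
  have "Suc (Max (t_exps X B)) \<notin> t_exps X B" using fin ne Max_ge Suc_n_not_le_n by blast
  then have "card (insert (Suc (Max (t_exps X B))) (t_exps X B)) = Suc (card (t_exps X B))"
    using fin by simp
  moreover have "insert (Suc (Max (t_exps X B))) (t_exps X B) \<subseteq> t_exps (mul_vars N X) B"
    using below shifted Max_in[OF fin(1) ne] by blast
  ultimately show ?thesis using card_mono[OF fin(2)] by (metis Suc_le_lessD)
qed

lemma t_exps_mul_vars_compress:
  assumes X: "X \<subseteq> monos_in N d"
  shows "t_exps (mul_vars N (compress d X)) B \<subseteq> {0..<card (t_exps (mul_vars N X) B)}"
proof
  fix \<tau> assume "\<tau> \<in> t_exps (mul_vars N (compress d X)) B"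
  then obtain k x where kx: "k \<in> N" "x \<in> compress d X" "base (inc_exp k x) = B" "\<tau> = inc_exp k x t"
    unfolding t_exps_def mem_mul_vars by auto
  have xl: "x t < card (t_exps X (base x))" using kx(2) unfolding compress_def by simp
  then have "t_exps X (base x) \<noteq> {}" by auto
  then obtain x0 where x0: "x0 \<in> X" "base x0 = base x" unfolding t_exps_def by auto
  have fin: "finite (t_exps (mul_vars N X) B)"
    using finite_t_exps mul_vars_monos_in[OF finite_N X] by blast
  show "\<tau> \<in> {0..<card (t_exps (mul_vars N X) B)}"
  proof (cases "k = t")
    case False
    have "base (inc_exp k x0) = B" using x0(2) kx(3) by (metis base_inc_exp)
    then have "t_exps X (base x) \<subseteq> t_exps (mul_vars N X) B"
      using t_exps_subset_mul_vars[OF kx(1) False x0(1)] x0(2) by simp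
    then have "card (t_exps X (base x)) \<le> card (t_exps (mul_vars N X) B)" by (rule card_mono[OF fin])
    moreover have "\<tau> = x t" using kx(4) False by (simp add: inc_exp_apply)
    ultimately show ?thesis using xl by simp
  next
    case True
    then show ?thesis
      using card_t_exps_less_mul_vars[OF X, of B] \<open>t_exps X (base x) \<noteq> {}\<close> xl kx(3,4)
      by (auto simp: base_inc_exp inc_exp_apply)
  qed
qed

lemma card_mul_vars_compress_le:
  assumes X: "X \<subseteq> monos_in N d"
  shows "card (mul_vars N (compress d X)) \<le> card (mul_vars N X)"
proof -
  have M: "mul_vars N (compress d X) \<subseteq> monos_in N (Suc d)" "mul_vars N X \<subseteq> monos_in N (Suc d)"
    using compress_subset X by (auto intro!: mul_vars_monos_in[OF finite_N])
  have "card (t_exps (mul_vars N (compress d X)) B) \<le> card (t_exps (mul_vars N X) B)" for B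
    using card_mono[OF _ t_exps_mul_vars_compress[OF X, of B]] by simp
  then show ?thesis unfolding card_by_fibres[OF M(1)] card_by_fibres[OF M(2)] by (rule sum_mono)
qed

lemma t_weight_compress_less:
  assumes X: "X \<subseteq> monos_in N d" and w: "w \<in> X" "0 < w t" "inc_exp j (dec_exp t w) \<notin> X"
  shows "(\<Sum>x\<in>compress d X. x t) < (\<Sum>x\<in>X. x t)"
proof -
  let ?Bs = "base ` monos_in N d"
  have wm: "w \<in> monos_in N d" using w X by auto
  have "t_exps X (base w) \<noteq> {0..<card (t_exps X (base w))}"
  proof
    assume segment: "t_exps X (base w) = {0..<card (t_exps X (base w))}"
    have "w t \<in> t_exps X (base w)" using w unfolding t_exps_def by auto
    then have "w t - 1 \<in> t_exps X (base w)" by (subst segment) (subst (asm) segment, auto)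
    then obtain x where x: "x \<in> X" "base x = base w" "x t = w t - 1" unfolding t_exps_def by auto
    define z where "z = inc_exp j (dec_exp t w)"
    have "z \<in> monos_in N d"
      using inc_exp_monos_in[OF finite_N j_in_N dec_exp_monos_in(1)[OF finite_N w(2) wm]]
        dec_exp_monos_in(2)[OF finite_N w(2) wm] unfolding z_def by simp
    moreover have "base z = base w" "z t = w t - 1"
      unfolding z_def base_def inc_exp_def dec_exp_def using j_neq_t by (auto simp: fun_eq_iff)
    ultimately have "x = z" using fibre_inj[of x d z] x X by auto
    then show False using x(1) w(3) z_def by simp
  qed
  then have "\<Sum>{0..<card (t_exps X (base w))} < \<Sum>(t_exps X (base w))"
    using sum_initial_segment_le[OF finite_t_exps[OF X]] le_neq_trans by blast
  moreover have "\<forall>B\<in>?Bs. \<Sum>{0..<card (t_exps X B)} \<le> \<Sum>(t_exps X B)"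
    using sum_initial_segment_le[OF finite_t_exps[OF X]] by blast
  ultimately have "(\<Sum>B\<in>?Bs. \<Sum>{0..<card (t_exps X B)}) < (\<Sum>B\<in>?Bs. \<Sum>(t_exps X B))"
    using wm finite_monos_in[OF finite_N] by (intro sum_strict_mono_ex1) auto
  then show ?thesis
    unfolding t_weight_by_fibres[OF compress_subset] t_weight_by_fibres[OF X] t_exps_compress[OF X] .
qed

end

definition t_stable :: "nat set \<Rightarrow> nat \<Rightarrow> monomial set \<Rightarrow> bool" where
  "t_stable N t W \<longleftrightarrow> (\<forall>w\<in>W. 0 < w t \<longrightarrow> (\<forall>j\<in>N. j \<noteq> t \<longrightarrow> inc_exp j (dec_exp t w) \<in> W))"

lemma exists_t_stable:
  assumes "finite N" "t \<in> N" "W \<subseteq> monos_in N d"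
  shows "\<exists>S. S \<subseteq> monos_in N d \<and> card S = card W
           \<and> card (mul_vars N S) \<le> card (mul_vars N W) \<and> t_stable N t S"
  using assms(3)
proof (induction W rule: measure_induct_rule[where f = "\<lambda>W. \<Sum>w\<in>W. w t"])
  case (less W)
  show ?case
  proof (cases "t_stable N t W")
    case False
    then obtain w j where wj: "w \<in> W" "0 < w t" "j \<in> N" "j \<noteq> t" "inc_exp j (dec_exp t w) \<notin> W"
      unfolding t_stable_def by blast
    interpret compression N t j using assms wj by unfold_locales auto
    obtain S where "S \<subseteq> monos_in N d" "card S = card (compress d W)"
        "card (mul_vars N S) \<le> card (mul_vars N (compress d W))" "t_stable N t S"
      using less.IH[OF t_weight_compress_less[OF less.prems wj(1,2,5)] compress_subset] by blast
    then show ?thesis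
      using card_compress[OF less.prems] card_mul_vars_compress_le[OF less.prems] by auto
  qed (use less.prems in blast)
qed

section \<open>Macaulay's theorem\<close>

lemma exists_lift_degree:
  assumes "finite N" "s \<in> N" "W \<subseteq> monos_in N e" "e \<le> d"
  shows "\<exists>W'. W' \<subseteq> monos_in N d \<and> card W' = card W \<and> card (mul_vars N W') = card (mul_vars N W)"
proof (intro exI conjI)
  let ?c = "var_pow s (d - e)"
  show "mmul ?c ` W \<subseteq> monos_in N d"
    using mmul_image_monos_in[OF var_pow_monos_in[OF assms(1,2)] assms(3), of "d - e"] assms(4) by simp
qed (simp_all add: card_mmul_image mul_vars_mmul_image)

lemma card_cone_union:
  assumes "finite N" "s \<in> N" "B \<subseteq> monos_in (N - {s}) (Suc e)"
  shows "card (inc_exp s ` monos_in N e \<union> B) = card (monos_in N e) + card B"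
proof -
  have "inc_exp s ` monos_in N e \<inter> B = {}"
    using assms(3) monos_in_zero[of _ "N - {s}" "Suc e" s] by (fastforce simp: inc_exp_def)
  moreover have "finite B" using assms finite_monos_in[of "N - {s}"] finite_subset by blast
  ultimately show ?thesis
    using finite_monos_in[OF assms(1)] by (simp add: card_Un_disjoint card_inc_exp_image)
qed

lemma card_mul_vars_cone_union_le:
  assumes "finite N" "s \<in> N" "B \<subseteq> monos_in (N - {s}) (Suc e)"
  shows "card (mul_vars N (inc_exp s ` monos_in N e \<union> B))
           \<le> card (monos_in N (Suc e)) + card (mul_vars (N - {s}) B)"
proof -
  have all: "mul_vars N (monos_in N e) = monos_in N (Suc e)"
    using mul_vars_monos_in_eq[OF assms(1)] assms(2) by blast
  have "B \<subseteq> monos_in N (Suc e)" using assms monos_in_subset[of N "N - {s}"] by blast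
  have "mul_vars N B \<subseteq> inc_exp s ` monos_in N (Suc e) \<union> mul_vars (N - {s}) B"
  proof
    fix y assume "y \<in> mul_vars N B"
    then obtain k v where kv: "k \<in> N" "v \<in> B" "y = inc_exp k v" unfolding mem_mul_vars by blast
    show "y \<in> inc_exp s ` monos_in N (Suc e) \<union> mul_vars (N - {s}) B"
    proof (cases "k = s")
      case True
      then show ?thesis using kv \<open>B \<subseteq> monos_in N (Suc e)\<close> by blast
    next
      case False
      then have "y \<in> mul_vars (N - {s}) B" using kv unfolding mem_mul_vars by blast
      then show ?thesis by blast
    qed
  qed
  moreover have "mul_vars N (inc_exp s ` monos_in N e) = inc_exp s ` monos_in N (Suc e)"
    using all mul_vars_mmul_image[of N "var s"] by (simp add: mmul_var[abs_def])
  ultimately have "mul_vars N (inc_exp s ` monos_in N e \<union> B)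
      \<subseteq> inc_exp s ` monos_in N (Suc e) \<union> mul_vars (N - {s}) B"
    unfolding mul_vars_Un by blast
  moreover have "finite (mul_vars (N - {s}) B)"
    using assms finite_monos_in[of "N - {s}"] finite_subset by (blast intro: finite_mul_vars)
  ultimately have "card (mul_vars N (inc_exp s ` monos_in N e \<union> B))
      \<le> card (inc_exp s ` monos_in N (Suc e) \<union> mul_vars (N - {s}) B)"
    using finite_monos_in[OF assms(1)] by (intro card_mono) auto
  also have "\<dots> \<le> card (monos_in N (Suc e)) + card (mul_vars (N - {s}) B)"
    using card_Un_le card_inc_exp_image by metis
  finally show ?thesis .
qed

lemma le_of_binomial_le:
  assumes "m \<le> n" "k choose Suc m \<le> n choose Suc m"
  shows "k \<le> n"
proof (rule ccontr)
  assume "\<not> k \<le> n"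
  then have "Suc n choose Suc m \<le> k choose Suc m" by (intro binomial_right_mono) simp
  moreover have "Suc n choose Suc m = (n choose m) + (n choose Suc m)" by (rule binomial_Suc_Suc)
  moreover have "0 < n choose m" using assms(1) by simp
  ultimately show False using assms(2) by linarith
qed

lemma extremal_cone_union:
  assumes "finite N" "s \<in> N" "card N = Suc (Suc m)"
    and B: "B \<subseteq> monos_in (N - {s}) (Suc e)" "card (mul_vars (N - {s}) B) \<le> mac_up m (card B)"
      "card B < e + Suc m choose m"
  shows "card (inc_exp s ` monos_in N e \<union> B) = (e + Suc m choose Suc m) + card B"
    and "card (mul_vars N (inc_exp s ` monos_in N e \<union> B))
      \<le> mac_up (Suc m) ((e + Suc m choose Suc m) + card B)"
proof -
  have "mac_up (Suc m) ((e + Suc m choose Suc m) + card B)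
      = (Suc e + Suc m choose Suc m) + mac_up m (card B)"
    using mac_up_binomial_add[of "Suc m" "e + Suc m" "card B"] B(3) by simp
  then show "card (mul_vars N (inc_exp s ` monos_in N e \<union> B))
      \<le> mac_up (Suc m) ((e + Suc m choose Suc m) + card B)"
    using card_mul_vars_cone_union_le[OF assms(1,2) B(1)] card_monos_in[OF assms(1,3)] B(2) by simp
  show "card (inc_exp s ` monos_in N e \<union> B) = (e + Suc m choose Suc m) + card B"
    using card_cone_union[OF assms(1,2) B(1)] card_monos_in[OF assms(1,3)] by simp
qed

text \<open>In \<open>m + 1\<close> variables write \<open>h = (e + m choose m) + r\<close>: an extremal set is \<open>x\<^sub>s\<close> times all
  monomials of degree \<open>e\<close> together with an extremal set of size \<open>r\<close> in the other variables, moved to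
  degree \<open>d\<close> by a power of \<open>x\<^sub>s\<close>.\<close>

lemma exists_extremal_set_step:
  assumes "finite N" "card N = Suc (Suc m)" "0 < h" "h \<le> card (monos_in N d)"
    and IH: "\<And>N' d' h'. finite N' \<Longrightarrow> card N' = Suc m \<Longrightarrow> h' \<le> card (monos_in N' d')
      \<Longrightarrow> \<exists>W. W \<subseteq> monos_in N' d' \<and> card W = h' \<and> card (mul_vars N' W) \<le> mac_up m h'"
  shows "\<exists>W. W \<subseteq> monos_in N d \<and> card W = h \<and> card (mul_vars N W) \<le> mac_up (Suc m) h"
proof -
  obtain k r where kr: "Suc m \<le> k" "r < k choose m" "h = (k choose Suc m) + r"
    using macaulay_decomposition[of "Suc m" h] assms(3) by auto
  have card_d: "card (monos_in N d) = (d + Suc m) choose Suc m"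
    using card_monos_in assms(1,2) by blast
  then have "k \<le> d + Suc m" using le_of_binomial_le[of m "d + Suc m" k] assms(4) kr by simp
  then obtain e where e: "k = e + Suc m" "e \<le> d"
    using kr(1) by (metis add.commute add_le_imp_le_left le_add_diff_inverse)
  show ?thesis
  proof (cases "e = d")
    case True
    then have "card (monos_in N d) = h" "mac_up (Suc m) h = (Suc d + Suc m) choose Suc m"
      using assms(4) card_d kr e mac_up_binomial[of "Suc m" k] by simp_all
    moreover have "card (mul_vars N (monos_in N d)) = (Suc d + Suc m) choose Suc m"
      using mul_vars_monos_in_eq[of N d] card_monos_in[OF assms(1,2)] assms(1,2) by fastforce
    ultimately show ?thesis by (intro exI[of _ "monos_in N d"]) simp
  next
    case False
    obtain s where s: "s \<in> N" using assms(1,2) by fastforce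
    have N': "finite (N - {s})" "card (N - {s}) = Suc m" using assms(1,2) s by auto
    have "r \<le> card (monos_in (N - {s}) (Suc e))" using card_monos_in[OF N'] kr e by simp
    then obtain B where B: "B \<subseteq> monos_in (N - {s}) (Suc e)" "card B = r"
        "card (mul_vars (N - {s}) B) \<le> mac_up m r"
      using IH[OF N'] by blast
    let ?W = "inc_exp s ` monos_in N e \<union> B"
    have "?W \<subseteq> monos_in N (Suc e)"
      using B(1) monos_in_subset[OF assms(1), of "N - {s}"] inc_exp_monos_in[OF assms(1) s] by blast
    moreover have "card ?W = h" "card (mul_vars N ?W) \<le> mac_up (Suc m) h"
      using extremal_cone_union[OF assms(1) s assms(2) B(1)] B(2,3) kr e by simp_all
    moreover have "Suc e \<le> d" using False e(2) by simp
    ultimately show ?thesis using exists_lift_degree[OF assms(1) s, of ?W "Suc e" d] by metis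
  qed
qed

lemma exists_extremal_set:
  assumes "finite N" "card N = Suc m" "h \<le> card (monos_in N d)"
  shows "\<exists>W. W \<subseteq> monos_in N d \<and> card W = h \<and> card (mul_vars N W) \<le> mac_up m h"
  using assms
proof (induction m arbitrary: N d h)
  case 0
  then obtain t where N: "N = {t}" using card_1_singletonE by auto
  then have "card (mul_vars N (monos_in N d)) = 1" "h \<le> 1"
    using "0.prems"(3) by (simp_all add: mul_vars_insert monos_in_singleton)
  then show ?case
  proof (cases "h = 0")
    case False
    then show ?thesis
      using \<open>h \<le> 1\<close> \<open>card (mul_vars N (monos_in N d)) = 1\<close>
      by (intro exI[of _ "monos_in N d"]) (simp add: N monos_in_singleton)
  qed (auto intro!: exI[of _ "{}"])
next
  case (Suc m)
  then show ?case
    using exists_extremal_set_step[of N m h d] by (cases "h = 0") (auto intro!: exI[of _ "{}"])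
qed

lemma disjoint_var_pow_translates:
  assumes "finite N" "s \<noteq> s'" "A \<subseteq> monos_in N d" "B \<subseteq> monos_in N d"
  shows "mmul (var_pow s (Suc d)) ` A \<inter> mmul (var_pow s' (Suc d)) ` B = {}"
proof -
  have "Suc d \<le> mmul (var_pow s (Suc d)) a s" for a by (simp add: mmul_def var_pow_def)
  moreover have "mmul (var_pow s' (Suc d)) b s \<le> d" if "b \<in> B" for b
    using monos_in_le[OF assms(1)] assms(2,4) that by (auto simp: mmul_def var_pow_def)
  ultimately show ?thesis by (metis (no_types, lifting) disjoint_iff imageE not_less_eq_eq)
qed

text \<open>Subadditivity of \<open>h \<mapsto> h\<^bsup><j>\<^esup>\<close> follows from Macaulay's bound in \<open>j + 1\<close> variables: place
  extremal sets of sizes \<open>x\<close> and \<open>y\<close> in far apart regions, so that their union has shadow at most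
  \<open>x\<^bsup><j>\<^esup> + y\<^bsup><j>\<^esup>\<close>.\<close>

lemma mac_subadditive_if_macaulay:
  assumes macaulay: "\<And>N d W. finite N \<Longrightarrow> card N = Suc j \<Longrightarrow> W \<subseteq> monos_in N d
      \<Longrightarrow> mac_up j (card W) \<le> card (mul_vars N W)"
  shows "mac_subadditive j"
  unfolding mac_subadditive_def
proof (cases "j = 0")
  case False
  show "\<forall>x y. mac_up j (x + y) \<le> mac_up j x + mac_up j y"
  proof (intro allI)
    fix x y :: nat
    define N where "N = {0..j}"
    define d where "d = x + y"
    have N: "finite N" "card N = Suc j" "0 \<in> N" "1 \<in> N" using False unfolding N_def by auto
    have "Suc d \<le> (d + j) choose j" using Suc_le_add_choose[of j d] False by simp
    then have "x \<le> card (monos_in N d)" "y \<le> card (monos_in N d)"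
      using card_monos_in[OF N(1,2)] d_def by auto
    then obtain A B where A: "A \<subseteq> monos_in N d" "card A = x" "card (mul_vars N A) \<le> mac_up j x"
        and B: "B \<subseteq> monos_in N d" "card B = y" "card (mul_vars N B) \<le> mac_up j y"
      using exists_extremal_set[OF N(1,2)] by meson
    define A' where "A' = mmul (var_pow 0 (Suc d)) ` A"
    define B' where "B' = mmul (var_pow 1 (Suc d)) ` B"
    have "A' \<union> B' \<subseteq> monos_in N (Suc d + d)"
      using mmul_image_monos_in[OF var_pow_monos_in[OF N(1,3)] A(1)]
        mmul_image_monos_in[OF var_pow_monos_in[OF N(1,4)] B(1)] unfolding A'_def B'_def by blast
    moreover have "card (A' \<union> B') = x + y"
    proof -
      have "finite A" "finite B" using A(1) B(1) finite_monos_in[OF N(1)] finite_subset by blast+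
      then show ?thesis
        using disjoint_var_pow_translates[OF N(1) _ A(1) B(1), of 0 1] A(2) B(2)
        unfolding A'_def B'_def by (simp add: card_Un_disjoint card_mmul_image)
    qed
    ultimately have "mac_up j (x + y) \<le> card (mul_vars N (A' \<union> B'))"
      using macaulay[OF N(1,2)] by metis
    also have "\<dots> \<le> card (mul_vars N A') + card (mul_vars N B')"
      unfolding mul_vars_Un by (rule card_Un_le)
    also have "\<dots> \<le> mac_up j x + mac_up j y"
      using A(3) B(3) unfolding A'_def B'_def mul_vars_mmul_image card_mmul_image by simp
    finally show "mac_up j (x + y) \<le> mac_up j x + mac_up j y" .
  qed
qed simp

lemma card_mul_vars_ge_split:
  assumes "finite N" "t \<in> N" "finite S"
  shows "card (mul_vars (N - {t}) {w \<in> S. w t = 0}) + card S \<le> card (mul_vars N S)"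
proof -
  let ?F = "mul_vars (N - {t}) {w \<in> S. w t = 0}"
  have "y t = 0" if y: "y \<in> ?F" for y
  proof -
    obtain k v where "k \<in> N - {t}" "v \<in> {w \<in> S. w t = 0}" "y = inc_exp k v"
      using y unfolding mem_mul_vars by blast
    then show ?thesis by (simp add: inc_exp_apply)
  qed
  moreover have "0 < y t" if "y \<in> inc_exp t ` S" for y using that by (auto simp: inc_exp_apply)
  ultimately have "?F \<inter> inc_exp t ` S = {}" by fastforce
  moreover have "?F \<subseteq> mul_vars N S" by (rule mul_vars_mono) auto
  moreover have "inc_exp t ` S \<subseteq> mul_vars N S"
    using mul_vars_insert[of t N S] insert_absorb[OF assms(2)] by auto
  moreover have "finite ?F" using assms by (simp add: finite_mul_vars)
  ultimately show ?thesis
    using card_mono[OF finite_mul_vars[OF assms(1,3)], of "?F \<union> inc_exp t ` S"] assms(3)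
    by (simp add: card_Un_disjoint card_inc_exp_image)
qed

lemma t_stable_mul_vars_dec_exp_subset:
  assumes "t_stable N t S"
  shows "mul_vars N (dec_exp t ` {w \<in> S. 0 < w t}) \<subseteq> S"
proof
  fix y assume "y \<in> mul_vars N (dec_exp t ` {w \<in> S. 0 < w t})"
  then obtain k w where kw: "k \<in> N" "w \<in> S" "0 < w t" "y = inc_exp k (dec_exp t w)"
    unfolding mem_mul_vars by blast
  then show "y \<in> S"
    using assms inc_dec_exp[of w t] unfolding t_stable_def by (cases "k = t") auto
qed

lemma card_dec_exp_image: "card (dec_exp t ` {w \<in> S. 0 < w t}) = card {w \<in> S. 0 < w t}"
  by (intro card_image inj_onI) (metis inc_dec_exp mem_Collect_eq)

text \<open>The inductive step of Macaulay's theorem: split a \<open>t\<close>-stable set \<open>S\<close> into the part \<open>F\<close> free of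
  \<open>x\<^sub>t\<close> and the part divisible by \<open>x\<^sub>t\<close>; stability makes the latter, divided by \<open>x\<^sub>t\<close>, a set whose
  shadow lies in \<open>S\<close>, and \<open>mac_up_add_le\<close> combines the two bounds.\<close>

lemma macaulay_t_stable:
  assumes "finite N" "t \<in> N" "card N = Suc m" "0 < m"
    and subadditive: "\<And>j. j + 2 \<le> m \<Longrightarrow> mac_subadditive j"
    and macaulay_N': "\<And>F e. F \<subseteq> monos_in (N - {t}) e
      \<Longrightarrow> mac_up (m - 1) (card F) \<le> card (mul_vars (N - {t}) F)"
    and macaulay_lower: "\<And>W. 0 < d \<Longrightarrow> W \<subseteq> monos_in N (d - 1)
      \<Longrightarrow> mac_up m (card W) \<le> card (mul_vars N W)"
    and S: "S \<subseteq> monos_in N d" "t_stable N t S"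
  shows "mac_up m (card S) \<le> card (mul_vars N S)"
proof -
  define F where "F = {w \<in> S. w t = 0}"
  define P where "P = {w \<in> S. 0 < w t}"
  have fin: "finite S" using S(1) finite_monos_in[OF assms(1)] finite_subset by blast
  have card_S: "card S = card F + card (dec_exp t ` P)"
  proof -
    have "S = F \<union> P" "F \<inter> P = {}" unfolding F_def P_def by auto
    then show ?thesis using fin card_dec_exp_image[of t S] unfolding P_def
      by (metis card_Un_disjoint finite_Un)
  qed
  have "F \<subseteq> monos_in (N - {t}) d"
    using S(1) monos_in_exp_zero[OF assms(1,2)] unfolding F_def by blast
  then have "mac_up (m - 1) (card F) \<le> card (mul_vars (N - {t}) F)" by (rule macaulay_N')
  moreover have "card (mul_vars (N - {t}) F) + card S \<le> card (mul_vars N S)"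
    using card_mul_vars_ge_split[OF assms(1,2) fin] unfolding F_def .
  ultimately have "mac_up (m - 1) (card F) + card S \<le> card (mul_vars N S)" by linarith
  moreover have "mac_up m (card (dec_exp t ` P)) \<le> card F + card (dec_exp t ` P)"
  proof (cases "P = {}")
    case False
    then obtain w where w: "w \<in> S" "0 < w t" unfolding P_def by auto
    then have "0 < d" using dec_exp_monos_in(2)[OF assms(1)] S(1) by blast
    moreover have "dec_exp t ` P \<subseteq> monos_in N (d - 1)"
      using dec_exp_monos_in(1)[OF assms(1)] S(1) unfolding P_def by blast
    ultimately have "mac_up m (card (dec_exp t ` P)) \<le> card (mul_vars N (dec_exp t ` P))"
      by (rule macaulay_lower)
    also have "\<dots> \<le> card S"
      using t_stable_mul_vars_dec_exp_subset[OF S(2)] fin unfolding P_def by (rule card_mono[rotated])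
    finally show ?thesis using card_S by simp
  qed simp
  then have "mac_up m (card S) \<le> mac_up (m - 1) (card F) + card S"
    using mac_up_add_le[OF assms(4) subadditive] card_S by (simp add: add.assoc)
  ultimately show ?thesis by simp
qed

theorem macaulay:
  assumes "finite N" "card N = Suc m" "W \<subseteq> monos_in N d"
  shows "mac_up m (card W) \<le> card (mul_vars N W)"
  using assms
proof (induction m arbitrary: N d W rule: less_induct)
  case (less m)
  show ?case
  proof (cases "m = 0")
    case True
    then obtain t where "N = {t}" using less.prems card_1_singletonE by auto
    then show ?thesis using True by (simp add: mul_vars_insert card_inc_exp_image)
  next
    case False
    obtain t where t: "t \<in> N" using less.prems by fastforce
    have N': "finite (N - {t})" "card (N - {t}) = Suc (m - 1)" using less.prems t False by auto
    have subadditive: "mac_subadditive j" if "j + 2 \<le> m" for j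
      using that less.IH by (intro mac_subadditive_if_macaulay) auto
    have macaulay_N': "mac_up (m - 1) (card F) \<le> card (mul_vars (N - {t}) F)"
      if "F \<subseteq> monos_in (N - {t}) e" for F e
      using less.IH[OF _ N' that] False by simp
    show ?thesis
      using less.prems(3)
    proof (induction d arbitrary: W rule: less_induct)
      case (less d W)
      have lower: "mac_up m (card V) \<le> card (mul_vars N V)" if "0 < d" "V \<subseteq> monos_in N (d - 1)" for V
        using less.IH[of "d - 1" V] that by simp
      obtain S where S: "S \<subseteq> monos_in N d" "card S = card W"
          "card (mul_vars N S) \<le> card (mul_vars N W)" "t_stable N t S"
        using exists_t_stable[OF \<open>finite N\<close> t less.prems] by blast
      have "mac_up m (card S) \<le> card (mul_vars N S)"
        using False by (intro macaulay_t_stable[OF \<open>finite N\<close> t \<open>card N = Suc m\<close> _ subadditive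
            macaulay_N' lower S(1,4)]) auto
      then show ?case using S(2,3) by simp
    qed
  qed
qed

lemma bin_up_le_card_mul_vars:
  assumes "finite N" "N \<noteq> {}" "W \<subseteq> monos_in N d"
  shows "bin_up (card N - 1) (card W) \<le> card (mul_vars N W)"
  using macaulay[OF assms(1) _ assms(3)] assms(1,2) by (simp add: bin_up_eq_mac_up card_gt_0_iff)

section \<open>The sets \<open>Kset i V\<close> and \<open>Dset i V\<close>\<close>

lemma mgcd_le: "finite V \<Longrightarrow> v \<in> V \<Longrightarrow> mgcd V k \<le> v k"
  unfolding mgcd_def by (intro Min_le) auto

lemma Kset_Un_Dset: "Kset i V \<union> Dset i V = V"
  and Kset_Int_Dset: "Kset i V \<inter> Dset i V = {}"
  and Kset_subset: "Kset i V \<subseteq> V"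
  and Dset_subset: "Dset i V \<subseteq> V"
  unfolding Kset_def Dset_def by auto

lemma Dset_exp:
  assumes "finite V" "w \<in> Dset i V"
  shows "w i = mgcd V i"
proof -
  have w: "w \<in> V" "\<not> mdvd (mmul (var i) (mgcd V)) w"
    using assms(2) unfolding Dset_def Kset_def by (auto split: if_splits)
  then obtain k where "\<not> inc_exp i (mgcd V) k \<le> w k" unfolding mdvd_def mmul_var by auto
  then show ?thesis using mgcd_le[OF assms(1) w(1), of k] mgcd_le[OF assms(1) w(1), of i]
    by (auto simp: inc_exp_apply split: if_splits)
qed

lemma Kset_exp:
  assumes "v \<in> Kset i V" "Dset i V \<noteq> {}"
  shows "mgcd V i < v i"
proof -
  have "mdvd (mmul (var i) (mgcd V)) v"
    using assms unfolding Kset_def Dset_def by (auto split: if_splits)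
  then show ?thesis unfolding mdvd_def mmul_var by (metis inc_exp_apply Suc_le_eq)
qed

lemma mul_vars_Dset_exp:
  assumes "finite V" "y \<in> mul_vars (N - {i}) (Dset i V)"
  shows "y i = mgcd V i"
proof -
  obtain k w where "k \<in> N - {i}" "w \<in> Dset i V" "y = inc_exp k w"
    using assms(2) unfolding mem_mul_vars by blast
  then show ?thesis using Dset_exp[OF assms(1)] by (simp add: inc_exp_apply)
qed

lemma mul_vars_Kset_Dset:
  assumes "i \<in> N"
  shows "mul_vars N V
    = (mul_vars N (Kset i V) \<union> inc_exp i ` Dset i V) \<union> mul_vars (N - {i}) (Dset i V)"
proof -
  have "mul_vars N V = mul_vars N (Kset i V) \<union> mul_vars N (Dset i V)"
    using mul_vars_Un Kset_Un_Dset by metis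
  also have "mul_vars N (Dset i V) = inc_exp i ` Dset i V \<union> mul_vars (N - {i}) (Dset i V)"
    using mul_vars_insert[of i "N - {i}"] assms by (simp add: insert_absorb)
  finally show ?thesis by blast
qed

lemma mul_vars_Kset_Dset_disjoint:
  assumes "finite V"
  shows "(mul_vars N (Kset i V) \<union> inc_exp i ` Dset i V) \<inter> mul_vars (N - {i}) (Dset i V) = {}"
proof -
  have "mgcd V i < y i"
    if y: "y \<in> mul_vars N (Kset i V) \<union> inc_exp i ` Dset i V" and D: "Dset i V \<noteq> {}" for y
  proof (cases "y \<in> mul_vars N (Kset i V)")
    case True
    then obtain k v where "v \<in> Kset i V" "y = inc_exp k v" unfolding mem_mul_vars by blast
    then show ?thesis using Kset_exp[OF _ D] by (fastforce simp: inc_exp_apply)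
  next
    case False
    then obtain w where "w \<in> Dset i V" "y = inc_exp i w" using y by blast
    then show ?thesis using Dset_exp[OF assms] by (simp add: inc_exp_apply)
  qed
  then show ?thesis using mul_vars_Dset_exp[OF assms] by fastforce
qed

lemma mul_vars_Dset_subset:
  assumes "finite V" "i \<in> N"
  shows "mul_vars (N - {i}) (Dset i V) \<subseteq> mul_vars N V - inc_exp i ` V"
proof -
  have "mgcd V i < y i" if "y \<in> inc_exp i ` V" for y
    using that mgcd_le[OF assms(1)] by (auto simp: inc_exp_apply le_imp_less_Suc)
  then show ?thesis
    using mul_vars_Kset_Dset[OF assms(2), of V] mul_vars_Dset_exp[OF assms(1)] by fastforce
qed

lemma card_mul_vars_Kset_Dset:
  assumes "finite N" "finite V" "i \<in> N"
  shows "card (mul_vars N V)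
    = card (mul_vars N (Kset i V) \<union> inc_exp i ` Dset i V) + card (mul_vars (N - {i}) (Dset i V))"
proof -
  have "finite (Kset i V)" "finite (Dset i V)"
    using finite_subset[OF Kset_subset assms(2)] finite_subset[OF Dset_subset assms(2)] .
  then have "finite (mul_vars N (Kset i V) \<union> inc_exp i ` Dset i V)"
    "finite (mul_vars (N - {i}) (Dset i V))"
    using assms(1) by (simp_all add: finite_mul_vars)
  then show ?thesis
    unfolding mul_vars_Kset_Dset[OF assms(3), of V]
    by (rule card_Un_disjoint) (rule mul_vars_Kset_Dset_disjoint[OF assms(2)])
qed

lemma inc_exp_image_subset_mul_vars_iff:
  assumes "A \<inter> B = {}"
  shows "inc_exp i ` A \<subseteq> mul_vars N B \<longleftrightarrow> inc_exp i ` A \<subseteq> mul_vars (N - {i}) B"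
proof
  assume sub: "inc_exp i ` A \<subseteq> mul_vars N B"
  show "inc_exp i ` A \<subseteq> mul_vars (N - {i}) B"
  proof
    fix y assume y: "y \<in> inc_exp i ` A"
    then obtain a where a: "a \<in> A" "y = inc_exp i a" by blast
    obtain k b where "k \<in> N" "b \<in> B" "y = inc_exp k b"
      using sub y unfolding subset_iff mem_mul_vars by meson
    note akb = a this
    have "k \<noteq> i"
    proof
      assume "k = i"
      then have "a = b" using akb(2,5) inc_exp_inject by metis
      then show False using akb(1,4) assms by blast
    qed
    then show "y \<in> mul_vars (N - {i}) B" using akb(3-5) unfolding mem_mul_vars by blast
  qed
next
  assume "inc_exp i ` A \<subseteq> mul_vars (N - {i}) B"
  then show "inc_exp i ` A \<subseteq> mul_vars N B" using mul_vars_mono[of B B "N - {i}" N] by blast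
qed

lemma mdiv_mmul:
  assumes "mdvd u w"
  shows "mmul u (\<lambda>k. w k - u k) = w"
  using assms by (auto simp: mdvd_def mmul_def)

lemma card_mdiv:
  assumes "\<forall>w\<in>W. mdvd u w"
  shows "card (mdiv u W) = card W"
proof -
  have "mdiv u W = (\<lambda>w k. w k - u k) ` W" unfolding mdiv_def by auto
  moreover have "inj_on (\<lambda>w k. w k - u k) W"
    using assms mdiv_mmul by (intro inj_onI) metis
  ultimately show ?thesis by (simp add: card_image)
qed

lemma mul_vars_mdiv:
  assumes "\<forall>w\<in>W. mdvd u w"
  shows "mul_vars N (mdiv u W) = mdiv u (mul_vars N W)"
proof -
  have "inc_exp k (\<lambda>j. w j - u j) = (\<lambda>j. inc_exp k w j - u j)" if "w \<in> W" for k w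
    using assms that by (auto simp: inc_exp_apply mdvd_def Suc_diff_le)
  then show ?thesis unfolding mdiv_def mem_mul_vars set_eq_iff by fastforce
qed

lemma card_mul_vars_mdiv:
  assumes "\<forall>w\<in>W. mdvd u w"
  shows "card (mul_vars N (mdiv u W)) = card (mul_vars N W)"
proof -
  have "mdvd u y" if y: "y \<in> mul_vars N W" for y
  proof -
    obtain k w where "w \<in> W" "y = inc_exp k w" using y unfolding mem_mul_vars by blast
    then show ?thesis using assms unfolding mdvd_def by (auto simp: inc_exp_apply le_SucI)
  qed
  then have "\<forall>y\<in>mul_vars N W. mdvd u y" by blast
  then show ?thesis unfolding mul_vars_mdiv[OF assms] by (rule card_mdiv)
qed

lemma mdvd_mgcd: "finite V \<Longrightarrow> v \<in> V \<Longrightarrow> mdvd (mgcd V) v"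
  unfolding mdvd_def using mgcd_le by blast

lemma mdiv_Dset_monos_in:
  assumes "finite N" "i \<in> N" "V \<subseteq> monos_in N d"
  shows "mdiv (mgcd V) (Dset i V) \<subseteq> monos_in (N - {i}) (d - (\<Sum>k\<in>N. mgcd V k))"
proof
  fix z assume "z \<in> mdiv (mgcd V) (Dset i V)"
  then obtain w where w: "w \<in> Dset i V" "z = (\<lambda>k. w k - mgcd V k)" unfolding mdiv_def by auto
  have fin: "finite V" using assms(1,3) finite_monos_in finite_subset by blast
  have wV: "w \<in> monos_in N d" "\<And>k. mgcd V k \<le> w k"
    using w(1) Dset_subset assms(3) mgcd_le[OF fin] by blast+
  have "z i = 0" using Dset_exp[OF fin w(1)] w(2) by simp
  then have "(\<Sum>k\<in>N - {i}. z k) = (\<Sum>k\<in>N. z k)" using assms(1,2) by (simp add: sum.remove)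
  also have "\<dots> = (\<Sum>k\<in>N. w k) - (\<Sum>k\<in>N. mgcd V k)"
    unfolding w(2) using wV(2) by (simp add: sum_subtractf_nat)
  finally show "z \<in> monos_in (N - {i}) (d - (\<Sum>k\<in>N. mgcd V k))"
    using wV(1) \<open>z i = 0\<close> unfolding w(2) monos_in_def by auto
qed

lemma card_mdiv_Dset:
  assumes "finite V"
  shows "card (mdiv (mgcd V) (Dset i V)) = card (Dset i V)"
    and "card (mul_vars N (mdiv (mgcd V) (Dset i V))) = card (mul_vars N (Dset i V))"
proof -
  have "\<forall>w\<in>Dset i V. mdvd (mgcd V) w" using mdvd_mgcd[OF assms] Dset_subset by blast
  then show "card (mdiv (mgcd V) (Dset i V)) = card (Dset i V)"
    and "card (mul_vars N (mdiv (mgcd V) (Dset i V))) = card (mul_vars N (Dset i V))"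
    by (rule card_mdiv, rule card_mul_vars_mdiv)
qed

lemma Dset_nonempty_imp_two_vars:
  assumes "finite N" "V \<subseteq> monos_in N d" "Dset i V \<noteq> {}"
  shows "N - {i} \<noteq> {}"
proof
  assume "N - {i} = {}"
  then have "V \<subseteq> monos_in {i} d" using assms(2) monos_in_subset[of "{i}" N d] by blast
  then have "card V \<le> card {var_pow i d}" by (intro card_mono) (auto simp: monos_in_singleton)
  then have "card V \<le> 1" by simp
  then show False using assms(3) unfolding Dset_def by simp
qed

lemma bin_up_le_card_mul_vars_Dset:
  assumes "finite N" "i \<in> N" "V \<subseteq> monos_in N d"
  shows "bin_up (card N - 2) (card (Dset i V)) \<le> card (mul_vars (N - {i}) (Dset i V))"
proof (cases "Dset i V = {}")
  case False
  have "finite V" using finite_subset[OF assms(3) finite_monos_in[OF assms(1)]] .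
  then show ?thesis
    using bin_up_le_card_mul_vars[OF _ Dset_nonempty_imp_two_vars[OF assms(1,3) False]
        mdiv_Dset_monos_in[OF assms]] card_mdiv_Dset assms(1,2)
    by (simp add: diff_diff_add numeral_2_eq_2)
qed (simp add: bin_up_def)

lemma gotzmann_iff:
  "W \<subseteq> monos_in N d \<Longrightarrow> gotzmann N W \<longleftrightarrow> card (mul_vars N W) = bin_up (card N - 1) (card W)"
  unfolding gotzmann_def by blast

lemma gotzmann_mdiv_Dset_iff:
  assumes "finite N" "i \<in> N" "V \<subseteq> monos_in N d"
  shows "gotzmann (N - {i}) (mdiv (mgcd V) (Dset i V))
    \<longleftrightarrow> card (mul_vars (N - {i}) (Dset i V)) = bin_up (card N - 2) (card (Dset i V))"
proof -
  have "finite V" using finite_subset[OF assms(3) finite_monos_in[OF assms(1)]] .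
  then show ?thesis
    using gotzmann_iff[OF mdiv_Dset_monos_in[OF assms]] card_mdiv_Dset assms(1,2)
    by (simp add: diff_diff_add numeral_2_eq_2)
qed

lemma card_Un_add_ge_iff:
  assumes "finite A" "finite X" "b \<le> card A" "c \<le> card C"
  shows "b + c \<le> card (A \<union> X) + card C"
    and "card (A \<union> X) + card C = b + c \<longleftrightarrow> card A = b \<and> card C = c \<and> X \<subseteq> A"
proof -
  have "card A \<le> card (A \<union> X)" using assms(1,2) by (intro card_mono) auto
  moreover have "card (A \<union> X) = card A \<longleftrightarrow> X \<subseteq> A"
    using assms(1,2) card_subset_eq[of "A \<union> X" A] by (auto simp: Un_absorb2)
  ultimately show "b + c \<le> card (A \<union> X) + card C"
    and "card (A \<union> X) + card C = b + c \<longleftrightarrow> card A = b \<and> card C = c \<and> X \<subseteq> A"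
    using assms(3,4) by auto
qed

theorem lemma2p1:
  fixes n d i :: nat and V :: "monomial set"
  assumes "V \<subseteq> monos_in {1..n} d" and "V \<noteq> {}"
    and "i \<in> {1..n}"
  shows "(mul_vars ({1..n} - {i}) (Dset i V)
           \<subseteq> mul_vars {1..n} V - mscale (var i) V)
       \<and> (card (mul_vars {1..n} V)
           \<ge> bin_up (n - 1) (card (Kset i V)) + bin_up (n - 2) (card (Dset i V)))
       \<and> (card (mul_vars {1..n} V)
           = bin_up (n - 1) (card (Kset i V)) + bin_up (n - 2) (card (Dset i V))
         \<longleftrightarrow> gotzmann {1..n} (Kset i V)
             \<and> gotzmann ({1..n} - {i}) (mdiv (mgcd V) (Dset i V))
             \<and> mscale (var i) (Dset i V) \<subseteq> mul_vars ({1..n} - {i}) (Kset i V))"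
proof -
  define N where "N = {1..n}"
  have N: "finite N" "i \<in> N" "card N = n" using assms(3) unfolding N_def by auto
  have V: "V \<subseteq> monos_in N d" "finite V"
    using assms(1) finite_subset[OF assms(1) finite_monos_in] unfolding N_def by auto
  have K: "Kset i V \<subseteq> monos_in N d" "finite (Kset i V)"
    using V(1) Kset_subset finite_subset[OF Kset_subset V(2)] by blast+
  have D: "finite (inc_exp i ` Dset i V)" using finite_subset[OF Dset_subset V(2)] by simp
  have "bin_up (n - 1) (card (Kset i V)) \<le> card (mul_vars N (Kset i V))"
    using bin_up_le_card_mul_vars[OF N(1) _ K(1)] N by auto
  note bounds = card_Un_add_ge_iff[OF finite_mul_vars[OF N(1) K(2)] D this
      bin_up_le_card_mul_vars_Dset[OF N(1,2) V(1)]]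
  have "inc_exp i ` Dset i V \<subseteq> mul_vars N (Kset i V)
      \<longleftrightarrow> inc_exp i ` Dset i V \<subseteq> mul_vars (N - {i}) (Kset i V)"
    using Kset_Int_Dset[of i V] by (intro inc_exp_image_subset_mul_vars_iff) (simp add: Int_commute)
  then show ?thesis
    using mul_vars_Dset_subset[OF V(2) N(2)] card_mul_vars_Kset_Dset[OF N(1) V(2) N(2)] bounds
      gotzmann_iff[OF K(1)] gotzmann_mdiv_Dset_iff[OF N(1,2) V(1)] N(3)
    unfolding N_def[symmetric] mscale_var by simp
qed

end
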